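(* Fix $N\ge3$ and $\lambda>0$, and let $\underline F(1)$ be defined (as a function of $p\in[0,1)$) by the recursion in the context. Then, as $p\downarrow0$, $$\underline F(1)=F_0(1)-\lambda^{-1}(N-1)\,p+o(p),$$ where $F_0(1)=\sum_{i=1}^{N-1}\frac{1}{\lambda i(N-i)}=\frac{2}{\lambda N}H_{N-1}$ and $H_n=\sum_{k=1}^n 1/k$.
   Context: For $N\ge3$, $\lambda>0$, $p\in[0,1)$: set $\underline F(N)=0$ and, for $i=N-1,\dots,1$, $\underline F(i)=(1-p)^{i(N-i)}\big[\frac{1}{\lambda i(N-i)}+\underline F(i+1)\big]+\sum_{c=1}^{N-i-1}\binom{N-i}{c}[1-(1-p)^i]^c(1-p)^{i(N-i-c)}\underline F(i+c)$. This is the paper's lower bound on the expected flooding time of an $N$-node network with ON/OFF edges (stationary ON probability $p$, exponential OFF periods of mean $\lambda^{-1}$, instantaneous transmission over ON edges). *)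

theory Defs
  imports "HOL-Analysis.Analysis" "HOL-Library.Landau_Symbols"
begin

text \<open>Lower bound on the expected flooding time: Flow N lam p i is the paper's
underline F(i), with underline F(N) = 0 (we set it 0 for all i >= N).\<close>

function Flow :: "nat \<Rightarrow> real \<Rightarrow> real \<Rightarrow> nat \<Rightarrow> real" where
  "Flow N lam p i =
     (if N \<le> i then 0
      else (1 - p) ^ (i * (N - i)) * (1 / (lam * real i * real (N - i)) + Flow N lam p (i + 1))
         + (\<Sum>c\<in>{1..N - i - 1}. real ((N - i) choose c) * (1 - (1 - p) ^ i) ^ c
              * (1 - p) ^ (i * (N - i - c)) * Flow N lam p (i + c)))"
  by pat_completeness auto
termination
  by (relation "Wellfounded.measure (\<lambda>(N, lam, p, i). N - i)") auto

end

theory Submission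
  imports Defs
begin

text \<open>At \<open>p = 0\<close> every edge is ON, so each level \<open>i\<close> is left only through the
  exponential waiting time: \<open>F(i) = 1/(\<lambda> i (N - i)) + F(i+1)\<close>, giving \<open>F\<^sub>0(1)\<close>.
  Differentiating the recursion at \<open>p = 0\<close>, only the factor \<open>(1 - p)^(i(N-i))\<close> and the
  one-step jump \<open>c = 1\<close> (whose weight \<open>(N-i)(1-(1-p)^i)\<close> has slope \<open>i(N-i)\<close>) contribute
  to first order; jumps with \<open>c \<ge> 2\<close> are \<open>O(p\<^sup>2)\<close>.  The contributions involving \<open>F(i+1)\<close>
  cancel, leaving \<open>F'(i) = -1/\<lambda> + F'(i+1)\<close>, so \<open>F'(1) = -(N-1)/\<lambda>\<close>.\<close>

declare Flow.simps[simp del]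

lemma Flow_eq_0: "N \<le> i \<Longrightarrow> Flow N lam p i = 0"
  by (simp add: Flow.simps)

lemma Flow_unfold:
  assumes "i < N"
  shows "Flow N lam p i = (1 - p) ^ (i * (N - i)) * (1 / (lam * real i * real (N - i)) + Flow N lam p (i + 1))
         + (\<Sum>c\<in>{1..N - i - 1}. real ((N - i) choose c) * (1 - (1 - p) ^ i) ^ c
              * (1 - p) ^ (i * (N - i - c)) * Flow N lam p (i + c))"
  using assms by (subst Flow.simps) simp

lemma Flow_at_0: "Flow N lam 0 i = (\<Sum>j=i..N-1. 1 / (lam * real j * real (N - j)))"
proof (induction "N - i" arbitrary: i rule: less_induct)
  case less
  show ?case
  proof (cases "i < N")
    case True
    have "Flow N lam 0 i = 1 / (lam * real i * real (N - i)) + Flow N lam 0 (i + 1)"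
      using Flow_unfold[OF True, of lam 0] by (simp add: power_0_left)
    also have "\<dots> = (\<Sum>j=i..N-1. 1 / (lam * real j * real (N - j)))"
      using less True by (simp add: sum.atLeast_Suc_atMost)
    finally show ?thesis .
  next
    case False
    then show ?thesis by (cases N) (auto simp: Flow_eq_0)
  qed
qed

lemma DERIV_transition_term_at_0:
  fixes f :: "real \<Rightarrow> real"
  assumes "(f has_real_derivative d) (at 0)" and "c \<ge> 1" and "i \<ge> 1"
  shows "((\<lambda>p. K * (1 - (1 - p) ^ i) ^ c * (1 - p) ^ m * f p) has_real_derivative
           (if c = 1 then K * real i * f 0 else 0)) (at 0)"
proof -
  have "((\<lambda>p. K * (1 - (1 - p) ^ i) ^ c * (1 - p) ^ m * f p) has_real_derivative
     K * (real c * (1 - (1 - 0) ^ i) ^ (c - 1) * (- (real i * (1 - 0) ^ (i - 1) * (- 1)))) * (1 - 0) ^ m * f 0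
     + K * (1 - (1 - 0) ^ i) ^ c * (real m * (1 - 0) ^ (m - 1) * (- 1)) * f 0
     + K * (1 - (1 - 0) ^ i) ^ c * (1 - 0) ^ m * d) (at 0)"
    by (auto intro!: derivative_eq_intros assms(1) simp: algebra_simps)
  then show ?thesis
    using assms(2) by (auto simp: power_0_left)
qed

lemma DERIV_Flow_jump_sum_at_0:
  assumes "1 \<le> i" "i < N"
    and D: "\<And>j. i < j \<Longrightarrow> j \<le> N \<Longrightarrow> ((\<lambda>p. Flow N lam p j) has_real_derivative D j) (at 0)"
  shows "((\<lambda>p. \<Sum>c\<in>{1..N - i - 1}. real ((N - i) choose c) * (1 - (1 - p) ^ i) ^ c
              * (1 - p) ^ (i * (N - i - c)) * Flow N lam p (i + c)) has_real_derivative
          real (i * (N - i)) * Flow N lam 0 (i + 1)) (at 0)"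
proof -
  have "((\<lambda>p. \<Sum>c\<in>{1..N - i - 1}. real ((N - i) choose c) * (1 - (1 - p) ^ i) ^ c
              * (1 - p) ^ (i * (N - i - c)) * Flow N lam p (i + c)) has_real_derivative
      (\<Sum>c\<in>{1..N - i - 1}. if c = 1 then real ((N - i) choose c) * real i * Flow N lam 0 (i + c) else 0)) (at 0)"
  proof (rule DERIV_sum)
    fix c assume "c \<in> {1..N - i - 1}"
    with assms show "((\<lambda>p. real ((N - i) choose c) * (1 - (1 - p) ^ i) ^ c
        * (1 - p) ^ (i * (N - i - c)) * Flow N lam p (i + c)) has_real_derivative
      (if c = 1 then real ((N - i) choose c) * real i * Flow N lam 0 (i + c) else 0)) (at 0)"
      by (intro DERIV_transition_term_at_0[OF D]) auto
  qed
  moreover have "(\<Sum>c\<in>{1..N - i - 1}. if c = 1 then real ((N - i) choose c) * real i * Flow N lam 0 (i + c) else 0)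
      = real (i * (N - i)) * Flow N lam 0 (i + 1)"
  proof (cases "i + 1 < N")
    case False
    then show ?thesis using assms by (simp add: Flow_eq_0)
  qed simp
  ultimately show ?thesis by simp
qed

lemma DERIV_Flow_at_0:
  assumes "1 \<le> i" "i \<le> N" "lam > 0"
  shows "((\<lambda>p. Flow N lam p i) has_real_derivative - real (N - i) / lam) (at 0)"
  using assms(1,2)
proof (induction "N - i" arbitrary: i rule: less_induct)
  case less
  show ?case
  proof (cases "i = N")
    case True
    then show ?thesis by (simp add: Flow_eq_0)
  next
    case False
    with less have iN: "i < N" by simp
    define a where "a = 1 / (lam * real i * real (N - i))"
    define n where "n = i * (N - i)"
    have D: "((\<lambda>p. Flow N lam p j) has_real_derivative - real (N - j) / lam) (at 0)"
      if "i < j" "j \<le> N" for j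
      using less that by auto
    have pow: "((\<lambda>p. (1 - p) ^ n) has_real_derivative - real n) (at 0)"
      by (rule derivative_eq_intros refl | simp)+
    have "((\<lambda>p. (1 - p) ^ n * (a + Flow N lam p (i + 1))
          + (\<Sum>c\<in>{1..N - i - 1}. real ((N - i) choose c) * (1 - (1 - p) ^ i) ^ c
              * (1 - p) ^ (i * (N - i - c)) * Flow N lam p (i + c))) has_real_derivative
        - real n * (a + Flow N lam 0 (i + 1)) + (- real (N - (i + 1)) / lam)
        + real n * Flow N lam 0 (i + 1)) (at 0)"
      using DERIV_add[OF DERIV_mult[OF pow DERIV_add[OF DERIV_const D[of "i + 1"]]]
          DERIV_Flow_jump_sum_at_0[OF less(2) iN D]] iN
      by (simp add: n_def)
    moreover have "Flow N lam p i = (1 - p) ^ n * (a + Flow N lam p (i + 1))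
          + (\<Sum>c\<in>{1..N - i - 1}. real ((N - i) choose c) * (1 - (1 - p) ^ i) ^ c
              * (1 - p) ^ (i * (N - i - c)) * Flow N lam p (i + c))" for p
      using Flow_unfold[OF iN] unfolding a_def n_def .
    moreover have "real n * a = 1 / lam"
      using iN less(2) assms(3) unfolding a_def n_def by (auto simp: field_simps)
    then have "- real n * (a + Flow N lam 0 (i + 1)) + (- real (N - (i + 1)) / lam)
        + real n * Flow N lam 0 (i + 1) = - real (N - i) / lam"
      using iN by (simp add: algebra_simps of_nat_diff diff_divide_distrib add_divide_distrib)
    ultimately show ?thesis
      by simp
  qed
qed

lemma sum_inverse_products_eq_harm:
  fixes N :: nat
  assumes "N \<ge> 1"
  shows "(\<Sum>i=1..N-1. 1 / (real i * real (N - i))) = 2 / real N * harm (N - 1)"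
proof -
  have "(\<Sum>i=1..N-1. 1 / (real i * real (N - i))) = (\<Sum>i=1..N-1. (1 / real i + 1 / real (N - i)) / real N)"
    using assms by (intro sum.cong) (auto simp: field_simps of_nat_diff)
  also have "\<dots> = ((\<Sum>i=1..N-1. 1 / real i) + (\<Sum>i=1..N-1. 1 / real (N - i))) / real N"
    by (simp add: add_divide_distrib sum.distrib sum_divide_distrib)
  also have "(\<Sum>i=1..N-1. 1 / real (N - i)) = (\<Sum>i=1..N-1. 1 / real i)"
    by (subst sum.atLeastAtMost_rev) (intro sum.cong, auto)
  finally show ?thesis
    by (simp add: harm_def divide_inverse)
qed

lemma DERIV_imp_smallo_at_right:
  fixes f :: "real \<Rightarrow> real"
  assumes "(f has_real_derivative D) (at 0)"
  shows "(\<lambda>p. f p - (f 0 + D * p)) \<in> o[at_right 0](\<lambda>p. p)"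
proof (rule smalloI_tendsto)
  have "((\<lambda>h. (f h - f 0) / h - D) \<longlongrightarrow> 0) (at 0)"
    using tendsto_diff[OF assms[unfolded DERIV_def] tendsto_const[of D]] by simp
  then have "((\<lambda>h. (f h - f 0) / h - D) \<longlongrightarrow> 0) (at_right 0)"
    by (rule tendsto_mono[OF at_le, rotated]) simp
  moreover have "\<forall>\<^sub>F h in at_right 0. (f h - f 0) / h - D = (f h - (f 0 + D * h)) / h"
    using eventually_at_right_less[of "0::real"] by eventually_elim (simp add: field_simps)
  ultimately show "((\<lambda>h. (f h - (f 0 + D * h)) / h) \<longlongrightarrow> 0) (at_right 0)"
    using tendsto_cong by fast
  show "\<forall>\<^sub>F h in at_right 0. (h::real) \<noteq> 0"
    using eventually_at_right_less[of "0::real"] by eventually_elim simp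
qed

theorem lemma2:
  fixes N :: nat and lam :: real
  assumes "N \<ge> 3" and "lam > 0"
  shows "(\<Sum>i=1..N-1. 1 / (lam * real i * real (N - i))) = 2 / (lam * real N) * harm (N - 1)
    \<and> (\<lambda>p. Flow N lam p 1 - ((\<Sum>i=1..N-1. 1 / (lam * real i * real (N - i)))
                               - (real N - 1) / lam * p)) \<in> o[at_right 0](\<lambda>p. p)"
proof
  have "(\<Sum>i=1..N-1. 1 / (lam * real i * real (N - i))) = (\<Sum>i=1..N-1. 1 / (real i * real (N - i))) / lam"
    by (simp add: sum_divide_distrib field_simps)
  then show "(\<Sum>i=1..N-1. 1 / (lam * real i * real (N - i))) = 2 / (lam * real N) * harm (N - 1)"
    using assms sum_inverse_products_eq_harm[of N] by simp
next
  have "- real (N - 1) / lam = - ((real N - 1) / lam)"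
    using assms by (simp add: of_nat_diff minus_divide_left)
  then have "((\<lambda>p. Flow N lam p 1) has_real_derivative - ((real N - 1) / lam)) (at 0)"
    using DERIV_Flow_at_0[of 1 N lam] assms by simp
  from DERIV_imp_smallo_at_right[OF this]
  show "(\<lambda>p. Flow N lam p 1 - ((\<Sum>i=1..N-1. 1 / (lam * real i * real (N - i)))
                               - (real N - 1) / lam * p)) \<in> o[at_right 0](\<lambda>p. p)"
    by (simp add: Flow_at_0)
qed

end
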